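(* Let $n\ge1$ and $A\subseteq\Omega_n$. Then $\mu_{n+1}(A\times\{0,1\})=\mu_n(A)$.
   Context: For $n\ge1$, $\Omega_n$ is the set of strings $\omega=\alpha_0\alpha_1\cdots\alpha_n$ with $\alpha_k\in\{0,1\}$, $\alpha_0=0$. For $\omega=\alpha_0\cdots\alpha_n$, $\omega'=\alpha'_0\cdots\alpha'_n\in\Omega_n$ let $D^n(\omega,\omega')=2^{-n}\prod_{k=1}^n i^{|\alpha_k-\alpha_{k-1}|}\prod_{k=1}^n i^{-|\alpha'_k-\alpha'_{k-1}|}\,\delta_{\alpha_n\alpha'_n}$ ($i=\sqrt{-1}$), and for $A\subseteq\Omega_n$ let $\mu_n(A)=\sum_{\omega,\omega'\in A}D^n(\omega,\omega')$. For $A\subseteq\Omega_n$, $A\times\{0,1\}=\{\omega0,\omega1:\omega\in A\}\subseteq\Omega_{n+1}$, where $\omega a$ is the string obtained by appending $a$ to the right of $\omega$. *)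

theory Defs
  imports Complex_Main
begin

text \<open>Strings \<omega> = \<alpha>_0 \<alpha>_1 ... \<alpha>_n are lists of length n+1 over {0,1} with \<alpha>_0 = 0;
  the entry \<alpha>_k is \<omega> ! k.\<close>

definition Omega :: "nat \<Rightarrow> nat list set" where
  "Omega n = {w. length w = n + 1 \<and> set w \<subseteq> {0, 1} \<and> w ! 0 = 0}"

definition D :: "nat \<Rightarrow> nat list \<Rightarrow> nat list \<Rightarrow> complex" where
  "D n w w' =
     (1 / 2 ^ n) *
     (\<Prod>k\<in>{1..n}. \<i> ^ (nat \<bar>int (w ! k) - int (w ! (k - 1))\<bar>)) *
     (\<Prod>k\<in>{1..n}. inverse (\<i> ^ (nat \<bar>int (w' ! k) - int (w' ! (k - 1))\<bar>))) *
     (if w ! n = w' ! n then 1 else 0)"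

definition mu :: "nat \<Rightarrow> nat list set \<Rightarrow> complex" where
  "mu n A = (\<Sum>w\<in>A. \<Sum>w'\<in>A. D n w w')"

definition times01 :: "nat list set \<Rightarrow> nat list set" where
  "times01 A = {w @ [a] | w a. w \<in> A \<and> a \<in> {0, 1}}"

end

theory Submission
  imports Defs
begin

text \<open>Appending a letter to both strings multiplies \<open>D\<close> by \<open>1/2\<close>, by the phase factors of the
  new last step, and by \<open>\<delta>\<^sub>a\<^sub>b\<close>. Summing over \<open>a = b \<in> {0,1}\<close>, the phase factors
  \<open>\<i>\<^bsup>|a-\<alpha>\<^sub>n|\<^esup> \<i>\<^bsup>-|a-\<alpha>'\<^sub>n|\<^esup>\<close> add up to \<open>2\<close> if \<open>\<alpha>\<^sub>n = \<alpha>'\<^sub>n\<close> and to \<open>\<i> - \<i> = 0\<close> otherwise, which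
  reproduces the factor \<open>\<delta>\<^bsub>\<alpha>\<^sub>n\<alpha>'\<^sub>n\<^esub>\<close> of \<open>D\<^sup>n(\<omega>,\<omega>')\<close>. Summing over \<open>\<omega>, \<omega>' \<in> A\<close> gives the claim.\<close>

definition phase :: "nat \<Rightarrow> nat list \<Rightarrow> complex" where
  "phase n w = (\<Prod>k\<in>{1..n}. \<i> ^ nat \<bar>int (w ! k) - int (w ! (k - 1))\<bar>)"

lemma D_eq_phase:
  "D n w w' = 1 / 2 ^ n * phase n w * inverse (phase n w') * (if w ! n = w' ! n then 1 else 0)"
  unfolding D_def phase_def by (simp add: prod_inversef[symmetric] comp_def)

lemma phase_snoc:
  assumes "length w = n + 1"
  shows "phase (Suc n) (w @ [a]) = phase n w * \<i> ^ nat \<bar>int a - int (w ! n)\<bar>"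
proof -
  have "(\<Prod>k\<in>{1..n}. \<i> ^ nat \<bar>int ((w @ [a]) ! k) - int ((w @ [a]) ! (k - 1))\<bar>) = phase n w"
    unfolding phase_def using assms by (intro prod.cong) (auto simp: nth_append)
  then show ?thesis
    unfolding phase_def[of "Suc n"] using assms by (simp add: nth_append)
qed

lemma sum_phase_step:
  assumes "x \<in> {0, 1}" "y \<in> {0, 1}"
  shows "(\<Sum>a\<in>{0::nat, 1}. \<i> ^ nat \<bar>int a - int x\<bar> * inverse (\<i> ^ nat \<bar>int a - int y\<bar>))
           = (if x = y then 2 else 0)"
  using assms by auto

lemma sum_D_snoc:
  assumes "length w = n + 1" "length w' = n + 1" "w ! n \<in> {0, 1}" "w' ! n \<in> {0, 1}"
  shows "(\<Sum>a\<in>{0::nat, 1}. \<Sum>b\<in>{0::nat, 1}. D (n + 1) (w @ [a]) (w' @ [b])) = D n w w'"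
proof -
  let ?c = "1 / 2 ^ (n + 1) * phase n w * inverse (phase n w')"
  let ?step = "\<lambda>a. \<i> ^ nat \<bar>int a - int (w ! n)\<bar> * inverse (\<i> ^ nat \<bar>int a - int (w' ! n)\<bar>)"
  have "D (n + 1) (w @ [a]) (w' @ [b]) = (if a = b then ?c * ?step a else 0)" for a b
    using assms by (simp add: D_eq_phase phase_snoc nth_append)
  then have "(\<Sum>a\<in>{0::nat, 1}. \<Sum>b\<in>{0::nat, 1}. D (n + 1) (w @ [a]) (w' @ [b]))
               = ?c * (\<Sum>a\<in>{0::nat, 1}. ?step a)"
    by (simp add: distrib_left)
  also have "\<dots> = ?c * (if w ! n = w' ! n then 2 else 0)"
    using sum_phase_step[OF assms(3,4)] by simp
  also have "\<dots> = D n w w'"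
    by (simp add: D_eq_phase)
  finally show ?thesis .
qed

lemma sum_times01: "(\<Sum>v\<in>times01 A. f v) = (\<Sum>w\<in>A. \<Sum>a\<in>{0, 1}. f (w @ [a]))"
proof -
  have "times01 A = (\<lambda>(w, a). w @ [a]) ` (A \<times> {0, 1})"
    unfolding times01_def by auto
  moreover have "inj_on (\<lambda>(w, a). w @ [a]) (A \<times> {0, 1})"
    by (auto simp: inj_on_def)
  ultimately have "(\<Sum>v\<in>times01 A. f v) = (\<Sum>(w, a)\<in>A \<times> {0, 1}. f (w @ [a]))"
    by (simp add: sum.reindex split_def)
  then show ?thesis
    unfolding sum.cartesian_product .
qed

lemma Omega_last_bit:
  assumes "w \<in> Omega n"
  shows "length w = n + 1" "w ! n \<in> {0, 1}"
proof -
  show "length w = n + 1"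
    using assms by (simp add: Omega_def)
  then have "w ! n \<in> set w"
    by simp
  then show "w ! n \<in> {0, 1}"
    using assms unfolding Omega_def by blast
qed

theorem lemma3p1:
  fixes n :: nat and A :: "nat list set"
  assumes "n \<ge> 1" and "A \<subseteq> Omega n"
  shows "mu (n + 1) (times01 A) = mu n A"
proof -
  have "mu (n + 1) (times01 A)
          = (\<Sum>w\<in>A. \<Sum>a\<in>{0, 1}. \<Sum>w'\<in>A. \<Sum>b\<in>{0, 1}. D (n + 1) (w @ [a]) (w' @ [b]))"
    unfolding mu_def sum_times01 ..
  also have "\<dots> = (\<Sum>w\<in>A. \<Sum>w'\<in>A. \<Sum>a\<in>{0, 1}. \<Sum>b\<in>{0, 1}. D (n + 1) (w @ [a]) (w' @ [b]))"
    by (intro sum.cong refl sum.swap)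
  also have "\<dots> = mu n A"
    unfolding mu_def using assms(2) Omega_last_bit
    by (intro sum.cong refl sum_D_snoc) blast+
  finally show ?thesis .
qed

end
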